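(* In the setting below with $P=\mathfrak A$, the worst case setting and the absolute error criterion, suppose $\lambda_1<1$. Then the following are equivalent: (a) $\{S_d\}$ is strongly polynomially tractable; (b) $\{S_d\}$ is polynomially tractable; (c) there exists $\tau\in(0,\infty)$ with $\lambda\in\ell_\tau$. The same equivalences hold if $\lambda_1\ge1$ and $\#I_d$ grows linearly with $d$, i.e. there is $c>0$ with $\#I_d\ge c\,d$ for all sufficiently large $d$.
   Context: Setting: $S_1:H_1\to G_1$ is a compact linear operator between real Hilbert spaces ($H_1$ infinite-dimensional separable); $\lambda=(\lambda_m)_{m\in\mathbb N}$, $\lambda_1\ge\lambda_2\ge\dots\ge0$, are the eigenvalues of $S_1^\dagger S_1$. $S_d=S_1^{\otimes d}:H_1^{\otimes d}\to G_1^{\otimes d}$. For each $d$ fix $\emptyset\ne I_d=\{i_1<\dots<i_{a_d}\}\subset\{1,\dots,d\}$ ($I_1=\{1\}$), put $a_d=\#I_d$, $b_d=d-a_d$, and fix one type $P\in\{\mathfrak S,\mathfrak A\}$ for all $d$; the problem $\{S_d\}$ is the family of restrictions of $S_d$ to the $I_d$-symmetric subspace (if $P=\mathfrak S$) or $I_d$-antisymmetric subspace (if $P=\mathfrak A$) of $H_1^{\otimes d}$, i.e. the range of $\frac1{a_d!}\sum_{\pi}(\pm1)U_\pi$, the sum over permutations $\pi$ of $\{1,\dots,d\}$ fixing all points outside $I_d$, $U_\pi(f_1\otimes\cdots\otimes f_d)=f_{\pi(1)}\otimes\cdots\otimes f_{\pi(d)}$, sign $(-1)^{|\pi|}$ used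 for $\mathfrak A$. Let $\nabla_d=\{k\in\mathbb N^d:k_{i_1}\le\dots\le k_{i_{a_d}}\}$ for $P=\mathfrak S$ and with strict inequalities for $P=\mathfrak A$; $\lambda_{d,k}=\prod_{l=1}^d\lambda_{k_l}$; $\psi:\mathbb N\to\nabla_d$ a bijection with $\lambda_{d,\psi(1)}\ge\lambda_{d,\psi(2)}\ge\cdots$. These are exactly the eigenvalues of $S_d^\dagger S_d$ on the subspace, and the information complexity (absolute error) is $n(\epsilon,d)=\#\{k\in\nabla_d:\lambda_{d,k}>\epsilon^2\}$, the initial error $\epsilon^{\rm init}_d=\sqrt{\lambda_{d,\psi(1)}}$ (equal to $\lambda_1^{d/2}$ if $P=\mathfrak S$, and $\sqrt{\lambda_1^{b_d}\lambda_1\lambda_2\cdots\lambda_{a_d}}$ if $P=\mathfrak A$). Polynomially tractable: $\exists C,p>0,q\ge0$ with $n(\epsilon,d)\le C\epsilon^{-p}d^q$ for all $d\in\mathbb N,\epsilon\in(0,1]$; strongly polynomially tractable: this with $q=0$. Standing assumptions: $\lambda_2>0$ and $\epsilon_d^{\rm init}>0$ for all $d$. $\ell_\tau$: sequences with $\|\lambda\|_{\ell_\tau}^\tau=\sum_m\lambda_m^\tau<\infty$. *)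

theory Defs
  imports "HOL-Analysis.Analysis"
begin

text \<open>The univariate eigenvalue sequence is \<open>lam :: nat \<Rightarrow> real\<close>, indexed from 1
  (\<open>lam 1 = \<lambda>\<^sub>1\<close>, \<open>lam 2 = \<lambda>\<^sub>2\<close>, ...; the value \<open>lam 0\<close> is irrelevant).
  A multi-index \<open>k \<in> \<nat>\<^sup>d\<close> is a function \<open>nat \<Rightarrow> nat\<close> with \<open>k l \<ge> 1\<close> for
  \<open>l \<in> {1..d}\<close> and \<open>k l = 0\<close> outside \<open>{1..d}\<close>.\<close>

definition eigen_seq :: "(nat \<Rightarrow> real) \<Rightarrow> bool" where
  "eigen_seq lam \<longleftrightarrow> (\<forall>m\<ge>1. 0 \<le> lam (Suc m) \<and> lam (Suc m) \<le> lam m)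
     \<and> ((\<lambda>m. lam m) \<longlonglongrightarrow> 0)"

definition index_family :: "(nat \<Rightarrow> nat set) \<Rightarrow> bool" where
  "index_family I \<longleftrightarrow> I 1 = {1} \<and> (\<forall>d\<ge>1. I d \<noteq> {} \<and> I d \<subseteq> {1..d})"

definition nabla_A :: "nat set \<Rightarrow> nat \<Rightarrow> (nat \<Rightarrow> nat) set" where
  "nabla_A J d = {k. (\<forall>l. l \<notin> {1..d} \<longrightarrow> k l = 0) \<and> (\<forall>l\<in>{1..d}. 1 \<le> k l)
       \<and> (\<forall>i\<in>J. \<forall>j\<in>J. i < j \<longrightarrow> k i < k j)}"

definition lam_d :: "(nat \<Rightarrow> real) \<Rightarrow> nat \<Rightarrow> (nat \<Rightarrow> nat) \<Rightarrow> real" where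
  "lam_d lam d k = (\<Prod>l\<in>{1..d}. lam (k l))"

definition n_A :: "(nat \<Rightarrow> real) \<Rightarrow> (nat \<Rightarrow> nat set) \<Rightarrow> real \<Rightarrow> nat \<Rightarrow> nat" where
  "n_A lam I \<epsilon> d = card {k \<in> nabla_A (I d) d. lam_d lam d k > \<epsilon>\<^sup>2}"

definition init_err_sq_A :: "(nat \<Rightarrow> real) \<Rightarrow> (nat \<Rightarrow> nat set) \<Rightarrow> nat \<Rightarrow> real" where
  "init_err_sq_A lam I d = lam 1 ^ (d - card (I d)) * (\<Prod>m\<in>{1..card (I d)}. lam m)"

definition poly_tractable_A :: "(nat \<Rightarrow> real) \<Rightarrow> (nat \<Rightarrow> nat set) \<Rightarrow> bool" where
  "poly_tractable_A lam I \<longleftrightarrow> (\<exists>C p q. C > 0 \<and> p > 0 \<and> q \<ge> 0 \<and>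
     (\<forall>d\<ge>1. \<forall>\<epsilon>\<in>{0<..1}. real (n_A lam I \<epsilon> d) \<le> C * \<epsilon> powr (-p) * real d powr q))"

definition strongly_poly_tractable_A :: "(nat \<Rightarrow> real) \<Rightarrow> (nat \<Rightarrow> nat set) \<Rightarrow> bool" where
  "strongly_poly_tractable_A lam I \<longleftrightarrow> (\<exists>C p. C > 0 \<and> p > 0 \<and>
     (\<forall>d\<ge>1. \<forall>\<epsilon>\<in>{0<..1}. real (n_A lam I \<epsilon> d) \<le> C * \<epsilon> powr (-p)))"

definition in_ell :: "real \<Rightarrow> (nat \<Rightarrow> real) \<Rightarrow> bool" where
  "in_ell \<tau> lam \<longleftrightarrow> summable (\<lambda>m. lam (Suc m) powr \<tau>)"

end

theory Submission
  imports Defs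
begin

text \<open>
  Necessity only uses \<open>d = 1\<close>: there \<open>n(\<epsilon>,1)\<close> counts the \<open>\<lambda>\<^sub>m > \<epsilon>\<^sup>2\<close>, and a polynomial
  bound on this count forces \<open>\<lambda>\<^sub>m^p = O(m\<^sup>-\<^sup>2)\<close>.

  Sufficiency rests on one counting estimate. A Markov-type argument bounds the number
  of multi-indices with weight above \<open>\<epsilon>\<^sup>2\<close> by a factorised sum of weights; combined with
  a rearrangement inequality along the antisymmetric directions \<open>I\<^sub>d\<close> it yields
  \<open>n(\<epsilon>,d) \<epsilon>^(4\<tau>) \<le> (\<lambda>\<^sub>1 \<cdots> \<lambda>\<^sub>a)^\<tau> (\<Sum> \<lambda>^\<tau>)^a (\<Sum> \<lambda>^(2\<tau>))^(d-a)\<close>, \<open>a = #I\<^sub>d\<close>.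
  If \<open>\<lambda>\<^sub>1 < 1\<close>, increasing \<open>\<tau>\<close> makes every factor at most 1; if \<open>a \<ge> c d\<close>, the
  geometric growth of the moment factors is absorbed by the decaying \<open>\<lambda>\<^sub>j^\<tau>\<close>.
\<close>

lemma eigen_seq_antimono:
  assumes "eigen_seq lam" and "1 \<le> m" and "m \<le> m'"
  shows "lam m' \<le> lam m"
  using \<open>m \<le> m'\<close>
proof (induction m' rule: dec_induct)
  case (step n)
  have "lam (Suc n) \<le> lam n" using assms(1,2) step(1) unfolding eigen_seq_def by simp
  then show ?case using step.IH by linarith
qed simp

lemma eigen_seq_nonneg:
  assumes "eigen_seq lam" and "1 \<le> m"
  shows "0 \<le> lam m"
proof -
  have "0 \<le> lam (Suc m)" using assms unfolding eigen_seq_def by simp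
  also have "\<dots> \<le> lam m" using eigen_seq_antimono[OF assms] by simp
  finally show ?thesis .
qed

lemma count_by_moments:
  fixes g :: "nat \<Rightarrow> nat \<Rightarrow> real" and A :: "(nat \<Rightarrow> nat) set"
  assumes L: "finite L"
    and A_supp: "\<And>k. k \<in> A \<Longrightarrow> (\<forall>l. l \<notin> L \<longrightarrow> k l = 0) \<and> (\<forall>l\<in>L. 1 \<le> k l)"
    and A_large: "\<And>k. k \<in> A \<Longrightarrow> t < c * (\<Prod>l\<in>L. g l (k l))"
    and "0 < t" "0 \<le> c" and g_nonneg: "\<And>l m. 0 \<le> g l m"
    and g_summable: "\<And>l. l \<in> L \<Longrightarrow> summable (\<lambda>m. g l (Suc m))"
  shows "real (card A) * t \<le> c * (\<Prod>l\<in>L. \<Sum>m. g l (Suc m))"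
proof (cases "finite A")
  case False
  have "0 \<le> (\<Prod>l\<in>L. \<Sum>m. g l (Suc m))"
    by (intro prod_nonneg suminf_nonneg) (use g_summable g_nonneg in auto)
  then show ?thesis using False \<open>0 \<le> c\<close> by simp
next
  case True
  define N where "N = Max (insert 0 ((\<lambda>(k, l). k l) ` (A \<times> L)))"
  have restr_box: "restrict k L \<in> PiE L (\<lambda>_. {1..N})" if "k \<in> A" for k
  proof -
    have "k l \<le> N" if "l \<in> L" for l
      unfolding N_def using True L \<open>k \<in> A\<close> that by (intro Max_ge) force+
    then show ?thesis using A_supp[OF that] by auto
  qed
  have inj: "inj_on (\<lambda>k. restrict k L) A"
  proof (rule inj_onI)
    fix k k' assume "k \<in> A" "k' \<in> A" "restrict k L = restrict k' L"
    then show "k = k'" using A_supp[of k] A_supp[of k'] by (auto simp: fun_eq_iff restrict_def) metis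
  qed
  have box_nonneg: "0 \<le> (\<Prod>l\<in>L. g l (h l))" for h by (intro prod_nonneg g_nonneg)
  have image_box: "(\<lambda>k. restrict k L) ` A \<subseteq> PiE L (\<lambda>_. {1..N})" using restr_box by blast
  have "real (card A) * t = (\<Sum>k\<in>A. t)" by simp
  also have "\<dots> \<le> (\<Sum>k\<in>A. c * (\<Prod>l\<in>L. g l (k l)))"
    by (rule sum_mono) (use A_large in \<open>auto intro: less_imp_le\<close>)
  also have "\<dots> = c * (\<Sum>h\<in>(\<lambda>k. restrict k L) ` A. \<Prod>l\<in>L. g l (h l))"
    by (simp add: sum.reindex[OF inj] sum_distrib_left)
  also have "\<dots> \<le> c * (\<Sum>h\<in>PiE L (\<lambda>_. {1..N}). \<Prod>l\<in>L. g l (h l))"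
    by (intro mult_left_mono sum_mono2 box_nonneg image_box \<open>0 \<le> c\<close> finite_PiE L) simp
  also have "\<dots> = c * (\<Prod>l\<in>L. \<Sum>m\<in>{1..N}. g l m)"
    by (simp add: prod_sum_PiE[OF L])
  also have "\<dots> \<le> c * (\<Prod>l\<in>L. \<Sum>m. g l (Suc m))"
  proof (intro mult_left_mono prod_mono conjI \<open>0 \<le> c\<close>)
    fix l assume "l \<in> L"
    show "0 \<le> (\<Sum>m\<in>{1..N}. g l m)" by (intro sum_nonneg g_nonneg)
    have "(\<Sum>m\<in>{1..N}. g l m) = (\<Sum>m<N. g l (Suc m))"
      by (metis One_nat_def sum.atLeast1_atMost_eq)
    also have "\<dots> \<le> (\<Sum>m. g l (Suc m))"
      by (rule sum_le_suminf) (use g_summable[OF \<open>l \<in> L\<close>] g_nonneg in auto)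
    finally show "(\<Sum>m\<in>{1..N}. g l m) \<le> (\<Sum>m. g l (Suc m))" .
  qed
  finally show ?thesis .
qed

lemma card_le_strict_mono_max:
  fixes k :: "nat \<Rightarrow> nat"
  assumes "finite J" "J \<noteq> {}" and pos: "\<forall>l\<in>J. 1 \<le> k l"
    and incr: "\<forall>i\<in>J. \<forall>j\<in>J. i < j \<longrightarrow> k i < k j"
  shows "card J \<le> k (Max J)"
proof -
  have "inj_on k J"
    by (rule inj_onI) (metis incr less_irrefl linorder_neqE_nat)
  moreover have "k ` J \<subseteq> {1..k (Max J)}"
  proof
    fix z assume "z \<in> k ` J"
    then obtain l where l: "l \<in> J" "z = k l" by blast
    have "l \<le> Max J" using l assms by simp
    then have "k l \<le> k (Max J)"
      using incr l Max_in[OF assms(1,2)] by (metis le_eq_less_or_eq less_imp_le)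
    then show "z \<in> {1..k (Max J)}" using l pos by auto
  qed
  ultimately show ?thesis by (metis card_atLeastAtMost card_image card_mono diff_Suc_1 finite_atLeastAtMost)
qed

text \<open>This is where antisymmetry pays off: the antisymmetric directions cannot all pick \<open>\<lambda>\<^sub>1\<close>.\<close>
lemma prod_strict_mono_le_initial:
  fixes mu :: "nat \<Rightarrow> real" and k :: "nat \<Rightarrow> nat"
  assumes anti: "\<And>m m'. 1 \<le> m \<Longrightarrow> m \<le> m' \<Longrightarrow> mu m' \<le> mu m"
    and nonneg: "\<And>m. 0 \<le> mu m"
    and "finite J" and pos: "\<forall>l\<in>J. 1 \<le> k l"
    and incr: "\<forall>i\<in>J. \<forall>j\<in>J. i < j \<longrightarrow> k i < k j"
  shows "(\<Prod>l\<in>J. mu (k l)) \<le> (\<Prod>j\<in>{1..card J}. mu j)"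
  using assms(3-5)
proof (induction "card J" arbitrary: J)
  case 0
  then show ?case by simp
next
  case (Suc n)
  then have "J \<noteq> {}" by auto
  define m where "m = Max J"
  have "m \<in> J" using Suc \<open>J \<noteq> {}\<close> m_def by simp
  have "card (J - {m}) = n" using Suc \<open>m \<in> J\<close> by simp
  then have IH: "(\<Prod>l\<in>J - {m}. mu (k l)) \<le> (\<Prod>j\<in>{1..n}. mu j)"
    using Suc.hyps(1)[of "J - {m}"] Suc.prems by fastforce
  have "Suc n \<le> k m"
    using card_le_strict_mono_max[OF Suc.prems(1) \<open>J \<noteq> {}\<close> Suc.prems(2,3)] Suc.hyps(2) m_def
    by simp
  have "(\<Prod>l\<in>J. mu (k l)) = mu (k m) * (\<Prod>l\<in>J - {m}. mu (k l))"
    using Suc.prems(1) \<open>m \<in> J\<close> by (simp add: prod.remove)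
  also have "\<dots> \<le> mu (Suc n) * (\<Prod>j\<in>{1..n}. mu j)"
    by (intro mult_mono IH anti \<open>Suc n \<le> k m\<close> nonneg prod_nonneg) auto
  also have "\<dots> = (\<Prod>j\<in>{1..Suc n}. mu j)"
    by (simp add: atLeastAtMostSuc_conv mult.commute)
  finally show ?case using Suc.hyps(2) by simp
qed

text \<open>For \<open>d = 1\<close> the problem is \<open>S\<^sub>1\<close> itself: if \<open>\<lambda>\<^sub>m > \<epsilon>\<^sup>2\<close>, the indices
  \<open>1, \<dots>, m\<close> are all counted, so \<open>n(\<epsilon>,1) \<ge> m\<close>.\<close>
lemma n_A_dim_one_lower:
  assumes E: "eigen_seq lam" and I: "index_family I"
    and "1 \<le> m" and "0 < \<epsilon>" and below: "\<epsilon>\<^sup>2 < lam m"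
  shows "m \<le> n_A lam I \<epsilon> 1"
proof -
  define emb :: "nat \<Rightarrow> nat \<Rightarrow> nat" where "emb j = (\<lambda>l. if l = 1 then j else 0)" for j
  let ?S = "{k \<in> nabla_A {1} 1. lam_d lam 1 k > \<epsilon>\<^sup>2}"
  obtain N where N: "\<And>j. j \<ge> N \<Longrightarrow> \<bar>lam j\<bar> < \<epsilon>\<^sup>2"
    using E \<open>0 < \<epsilon>\<close> unfolding eigen_seq_def
    by (metis LIMSEQ_D diff_zero real_norm_def zero_less_power)
  have "?S \<subseteq> emb ` {..<N}"
  proof
    fix k assume k: "k \<in> ?S"
    then have "k = emb (k 1)" unfolding nabla_A_def emb_def by (auto simp: fun_eq_iff)
    moreover have "\<epsilon>\<^sup>2 < lam (k 1)" using k unfolding lam_d_def by simp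
    then have "k 1 < N" using N[of "k 1"] by (cases "N \<le> k 1") auto
    ultimately show "k \<in> emb ` {..<N}" by blast
  qed
  then have "finite ?S" by (rule finite_subset) simp
  moreover have "emb ` {1..m} \<subseteq> ?S"
  proof
    fix k assume "k \<in> emb ` {1..m}"
    then obtain j where j: "j \<in> {1..m}" "k = emb j" by blast
    have "lam m \<le> lam j" using eigen_seq_antimono[OF E] j by auto
    then show "k \<in> ?S" using j below unfolding nabla_A_def emb_def lam_d_def by auto
  qed
  moreover have "inj_on emb {1..m}"
    by (rule inj_onI) (metis emb_def)
  ultimately have "m \<le> card ?S" by (metis card_atLeastAtMost card_image card_mono diff_Suc_1)
  also have "card ?S = n_A lam I \<epsilon> 1" using I unfolding n_A_def index_family_def by simp
  finally show ?thesis .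
qed

text \<open>A sequence with \<open>m f\<^sub>m^(p/2) \<le> B\<close> satisfies \<open>f\<^sub>m^p \<le> B\<^sup>2/m\<^sup>2\<close>, hence
  \<open>f \<in> \<ell>\<^sub>p\<close>.\<close>
lemma summable_powr_of_inverse_decay:
  fixes f :: "nat \<Rightarrow> real"
  assumes "0 < p" and decay: "\<And>m. 1 \<le> m \<Longrightarrow> real m * f m powr (p/2) \<le> B"
  shows "summable (\<lambda>m. f (Suc m) powr p)"
proof (rule summable_comparison_test)
  have "summable (\<lambda>m. inverse (real (Suc m) ^ 2))"
    using summable_Suc_iff[of "\<lambda>m. inverse (real m ^ 2)"] inverse_power_summable[of 2] by simp
  then show "summable (\<lambda>m. B\<^sup>2 * inverse (real (Suc m) ^ 2))" by (rule summable_mult)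
  show "\<exists>N. \<forall>m\<ge>N. norm (f (Suc m) powr p) \<le> B\<^sup>2 * inverse (real (Suc m) ^ 2)"
  proof (intro exI allI impI)
    fix m :: nat
    have "f (Suc m) powr p = (f (Suc m) powr (p/2))\<^sup>2"
      by (simp add: power2_eq_square powr_add[symmetric])
    also have "\<dots> \<le> (B / real (Suc m))\<^sup>2"
      using decay[of "Suc m"] by (intro power_mono) (auto simp: field_simps)
    finally show "norm (f (Suc m) powr p) \<le> B\<^sup>2 * inverse (real (Suc m) ^ 2)"
      by (simp add: power_divide field_simps)
  qed
qed

text \<open>Necessity: polynomial tractability at \<open>d = 1\<close>, evaluated at \<open>\<epsilon>\<^sup>2 = \<lambda>\<^sub>m/K\<close>, gives
  \<open>m \<lambda>\<^sub>m^(p/2) = O(1)\<close>, hence \<open>\<lambda> \<in> \<ell>\<^sub>p\<close>.\<close>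
lemma poly_tractable_imp_ell:
  assumes E: "eigen_seq lam" and I: "index_family I" and PT: "poly_tractable_A lam I"
  shows "\<exists>\<tau>>0. in_ell \<tau> lam"
proof -
  obtain C p q where "p > 0" and bound:
    "\<forall>d\<ge>1. \<forall>\<epsilon>\<in>{0<..1}. real (n_A lam I \<epsilon> d) \<le> C * \<epsilon> powr (-p) * real d powr q"
    using PT unfolding poly_tractable_A_def by blast
  define K where "K = 2 * max 1 (lam 1)"
  have "K > 0" unfolding K_def by simp
  have decay: "real m * lam m powr (p/2) \<le> C * K powr (p/2)" if "1 \<le> m" for m
  proof (cases "lam m = 0")
    case True
    then show ?thesis using bound[rule_format, of 1 1] \<open>K > 0\<close> by simp
  next
    case False
    then have "lam m > 0" using eigen_seq_nonneg[OF E that] by simp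
    define x where "x = lam m / K"
    have "x \<le> 1" "x < lam m" "0 < x"
      using \<open>lam m > 0\<close> eigen_seq_antimono[OF E order.refl that] unfolding x_def K_def
      by (auto simp: field_simps)
    then have "real m \<le> real (n_A lam I (sqrt x) 1)"
      using n_A_dim_one_lower[OF E I that, of "sqrt x"] by simp
    also have "\<dots> \<le> C * sqrt x powr (-p)"
      using bound[rule_format, of 1 "sqrt x"] \<open>0 < x\<close> \<open>x \<le> 1\<close> by simp
    also have "sqrt x powr (-p) = x powr (-p/2)"
      using \<open>0 < x\<close> by (simp add: sqrt_def root_powr_inverse powr_powr)
    finally have "real m * x powr (p/2) \<le> C * x powr (-p/2) * x powr (p/2)"
      by (rule mult_right_mono) simp
    also have "\<dots> = C" using \<open>0 < x\<close> by (simp add: mult.assoc powr_add[symmetric])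
    also have "x powr (p/2) = lam m powr (p/2) / K powr (p/2)"
      unfolding x_def using \<open>K > 0\<close> \<open>lam m > 0\<close> by (simp add: powr_divide)
    finally show ?thesis using \<open>K > 0\<close> by (simp add: field_simps)
  qed
  have "in_ell p lam"
    unfolding in_ell_def by (rule summable_powr_of_inverse_decay[OF \<open>p > 0\<close> decay])
  then show ?thesis using \<open>p > 0\<close> by blast
qed

definition moment :: "real \<Rightarrow> (nat \<Rightarrow> real) \<Rightarrow> real" where
  "moment \<tau> lam = (\<Sum>m. lam (Suc m) powr \<tau>)"

lemma moment_nonneg:
  assumes "in_ell \<sigma> lam"
  shows "0 \<le> moment \<sigma> lam"
  using assms unfolding moment_def in_ell_def by (intro suminf_nonneg) auto

text \<open>Since \<open>\<lambda>\<^sub>m \<le> \<lambda>\<^sub>1\<close>, membership in \<open>\<ell>\<^sub>\<tau>\<close> persists for larger exponents \<open>\<sigma>\<close>,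
  with \<open>\<Sum> \<lambda>\<^sub>m^\<sigma> \<le> \<lambda>\<^sub>1^(\<sigma>-\<tau>) \<Sum> \<lambda>\<^sub>m^\<tau>\<close>.\<close>
lemma ell_mono:
  assumes E: "eigen_seq lam" and "in_ell \<tau> lam" and "\<tau> \<le> \<sigma>"
  shows "in_ell \<sigma> lam" and "moment \<sigma> lam \<le> lam 1 powr (\<sigma> - \<tau>) * moment \<tau> lam"
proof -
  have sum_tau: "summable (\<lambda>m. lam (Suc m) powr \<tau>)" using assms(2) unfolding in_ell_def .
  have term_le: "lam (Suc m) powr \<sigma> \<le> lam 1 powr (\<sigma> - \<tau>) * lam (Suc m) powr \<tau>" for m
  proof (cases "lam (Suc m) = 0")
    case False
    have "0 \<le> lam (Suc m)" "lam (Suc m) \<le> lam 1"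
      using eigen_seq_nonneg[OF E] eigen_seq_antimono[OF E] by auto
    then have "lam (Suc m) powr (\<sigma> - \<tau>) \<le> lam 1 powr (\<sigma> - \<tau>)"
      using \<open>\<tau> \<le> \<sigma>\<close> by (intro powr_mono2) auto
    moreover have "lam (Suc m) powr \<sigma> = lam (Suc m) powr (\<sigma> - \<tau>) * lam (Suc m) powr \<tau>"
      using False by (simp add: powr_add[symmetric])
    ultimately show ?thesis by (simp add: mult_right_mono)
  qed simp
  have sum_bound: "summable (\<lambda>m. lam 1 powr (\<sigma> - \<tau>) * lam (Suc m) powr \<tau>)"
    by (rule summable_mult[OF sum_tau])
  show sum_sigma: "in_ell \<sigma> lam"
    unfolding in_ell_def by (rule summable_comparison_test[OF _ sum_bound]) (use term_le in auto)
  have "moment \<sigma> lam \<le> (\<Sum>m. lam 1 powr (\<sigma> - \<tau>) * lam (Suc m) powr \<tau>)"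
    unfolding moment_def
    by (rule suminf_le[OF term_le _ sum_bound]) (use sum_sigma in \<open>simp add: in_ell_def\<close>)
  also have "\<dots> = lam 1 powr (\<sigma> - \<tau>) * moment \<tau> lam"
    unfolding moment_def using suminf_mult[OF sum_tau] by simp
  finally show "moment \<sigma> lam \<le> lam 1 powr (\<sigma> - \<tau>) * moment \<tau> lam" .
qed

text \<open>Pointwise inequality for an antisymmetric multi-index: split \<open>\<lambda>\<^sub>d\<^sub>,\<^sub>k^(2\<tau>)\<close> as
  \<open>b\<^sup>2 a\<^sup>2\<close> with \<open>a\<close> the product along \<open>J\<close>, and bound one factor \<open>a\<close> by rearrangement.
  What remains weighs each direction in \<open>J\<close> by \<open>\<lambda>^\<tau>\<close> and every other one by \<open>\<lambda>^(2\<tau>)\<close>.\<close>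
lemma antisym_weight_bound:
  assumes E: "eigen_seq lam" and JL: "J \<subseteq> {1..d}" and k: "k \<in> nabla_A J d" and "0 < \<tau>"
  shows "lam_d lam d k powr (2 * \<tau>)
    \<le> (\<Prod>j\<in>{1..card J}. lam j powr \<tau>)
       * (\<Prod>l\<in>{1..d}. if l \<in> J then lam (k l) powr \<tau> else lam (k l) powr (2 * \<tau>))"
proof -
  define mu where "mu m = lam m powr \<tau>" for m
  define a where "a = (\<Prod>l\<in>J. mu (k l))"
  define b where "b = (\<Prod>l\<in>{1..d} - J. mu (k l))"
  have "finite J" using JL by (rule finite_subset) simp
  have split: "prod f {1..d} = prod f ({1..d} - J) * prod f J" for f :: "nat \<Rightarrow> real"
    by (rule prod.subset_diff[OF JL finite_atLeastAtMost])
  have "a \<le> (\<Prod>j\<in>{1..card J}. mu j)"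
    unfolding a_def
    by (rule prod_strict_mono_le_initial[OF _ _ \<open>finite J\<close>])
       (use k JL eigen_seq_nonneg[OF E] eigen_seq_antimono[OF E] \<open>0 < \<tau>\<close>
         in \<open>auto simp: mu_def nabla_A_def intro: powr_mono2\<close>)
  have "lam_d lam d k powr (2 * \<tau>) = (\<Prod>l\<in>{1..d}. mu (k l))\<^sup>2"
    unfolding lam_d_def mu_def prod_powr_distrib[symmetric]
    by (simp add: power2_eq_square powr_add[symmetric])
  also have "\<dots> = b\<^sup>2 * a * a"
    unfolding a_def b_def split by (simp add: power2_eq_square)
  also have "\<dots> \<le> b\<^sup>2 * a * (\<Prod>j\<in>{1..card J}. mu j)"
    using \<open>a \<le> _\<close> by (intro mult_left_mono) (auto simp: a_def mu_def prod_nonneg)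
  also have "b\<^sup>2 * a = (\<Prod>l\<in>{1..d}. if l \<in> J then mu (k l) else lam (k l) powr (2 * \<tau>))"
    unfolding split a_def b_def prod_power_distrib
    by (intro arg_cong2[where f = "(*)"] prod.cong)
       (auto simp: mu_def power2_eq_square powr_add[symmetric])
  finally show ?thesis unfolding mu_def by (simp add: mult.commute)
qed

lemma n_A_moment_bound:
  assumes E: "eigen_seq lam" and I: "index_family I" and "1 \<le> d"
    and "0 < \<epsilon>" and "0 < \<tau>" and ell: "in_ell \<tau> lam"
  shows "real (n_A lam I \<epsilon> d) * \<epsilon> powr (4 * \<tau>)
    \<le> (\<Prod>j\<in>{1..card (I d)}. lam j powr \<tau>)
       * moment \<tau> lam ^ card (I d) * moment (2 * \<tau>) lam ^ (d - card (I d))"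
proof -
  let ?L = "{1..d}" and ?J = "I d"
  define g where "g l m = (if l \<in> ?J then lam m powr \<tau> else lam m powr (2 * \<tau>))" for l m
  have JL: "?J \<subseteq> ?L" using I \<open>1 \<le> d\<close> unfolding index_family_def by auto
  have ell2: "in_ell (2 * \<tau>) lam" using ell_mono(1)[OF E ell] \<open>0 < \<tau>\<close> by simp
  have "real (n_A lam I \<epsilon> d) * \<epsilon> powr (4 * \<tau>)
      \<le> (\<Prod>j\<in>{1..card ?J}. lam j powr \<tau>) * (\<Prod>l\<in>?L. \<Sum>m. g l (Suc m))"
    unfolding n_A_def
  proof (rule count_by_moments)
    fix k assume k: "k \<in> {k \<in> nabla_A ?J d. lam_d lam d k > \<epsilon>\<^sup>2}"
    then show "(\<forall>l. l \<notin> ?L \<longrightarrow> k l = 0) \<and> (\<forall>l\<in>?L. 1 \<le> k l)"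
      unfolding nabla_A_def by auto
    have "\<epsilon> powr (4 * \<tau>) = (\<epsilon>\<^sup>2) powr (2 * \<tau>)"
      using \<open>0 < \<epsilon>\<close> by (simp add: powr_powr[symmetric])
    also have "\<dots> < lam_d lam d k powr (2 * \<tau>)"
      using k \<open>0 < \<epsilon>\<close> \<open>0 < \<tau>\<close> by (intro powr_less_mono2) auto
    also have "\<dots> \<le> (\<Prod>j\<in>{1..card ?J}. lam j powr \<tau>) * (\<Prod>l\<in>?L. g l (k l))"
      unfolding g_def using antisym_weight_bound[OF E JL _ \<open>0 < \<tau>\<close>] k by simp
    finally show "\<epsilon> powr (4 * \<tau>) < (\<Prod>j\<in>{1..card ?J}. lam j powr \<tau>) * (\<Prod>l\<in>?L. g l (k l))" .
  next
    fix l show "summable (\<lambda>m. g l (Suc m))"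
      using ell ell2 unfolding g_def in_ell_def by (cases "l \<in> ?J") simp_all
  qed (use \<open>0 < \<epsilon>\<close> in \<open>auto simp: g_def prod_nonneg\<close>)
  also have "(\<Prod>l\<in>?L. \<Sum>m. g l (Suc m))
      = moment (2 * \<tau>) lam ^ (d - card ?J) * moment \<tau> lam ^ card ?J"
  proof -
    have "card (?L - ?J) = d - card ?J"
      using card_Diff_subset[OF finite_subset[OF JL] JL] by simp
    then show ?thesis
      unfolding prod.subset_diff[OF JL finite_atLeastAtMost] g_def moment_def by simp
  qed
  finally show ?thesis by (simp add: mult_ac)
qed

lemma strongly_poly_tractable_from_bound:
  fixes lam :: "nat \<Rightarrow> real" and I :: "nat \<Rightarrow> nat set" and p C :: real
  assumes "0 < p"
    and bound: "\<And>d \<epsilon>. 1 \<le> d \<Longrightarrow> 0 < \<epsilon> \<Longrightarrow> \<epsilon> \<le> 1 \<Longrightarrow> real (n_A lam I \<epsilon> d) * \<epsilon> powr p \<le> C"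
  shows "strongly_poly_tractable_A lam I"
  unfolding strongly_poly_tractable_A_def
proof (intro exI conjI allI impI ballI)
  fix d :: nat and \<epsilon> :: real assume "1 \<le> d" "\<epsilon> \<in> {0<..1}"
  then have "real (n_A lam I \<epsilon> d) \<le> C / \<epsilon> powr p"
    using bound[of d \<epsilon>] by (simp add: field_simps)
  also have "\<dots> \<le> max 1 C * \<epsilon> powr (- p)"
    using \<open>\<epsilon> \<in> {0<..1}\<close> by (simp add: powr_minus_divide divide_right_mono)
  finally show "real (n_A lam I \<epsilon> d) \<le> max 1 C * \<epsilon> powr (- p)" .
qed (use \<open>0 < p\<close> in auto)

lemma strongly_poly_imp_poly:
  assumes "strongly_poly_tractable_A lam I"
  shows "poly_tractable_A lam I"
proof -
  obtain C p where "C > 0" "p > 0"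
    and bound: "\<forall>d\<ge>1. \<forall>\<epsilon>\<in>{0<..1}. real (n_A lam I \<epsilon> d) \<le> C * \<epsilon> powr (-p)"
    using assms unfolding strongly_poly_tractable_A_def by blast
  then have "\<forall>d\<ge>1. \<forall>\<epsilon>\<in>{0<..1}. real (n_A lam I \<epsilon> d) \<le> C * \<epsilon> powr (-p) * real d powr 0"
    by simp
  then show ?thesis unfolding poly_tractable_A_def using \<open>C > 0\<close> \<open>p > 0\<close> by blast
qed

text \<open>If \<open>\<lambda>\<^sub>1 < 1\<close>, raising the exponent from \<open>\<tau>\<close> to \<open>\<sigma> = \<tau> + n\<close> multiplies the moment by at
  most \<open>\<lambda>\<^sub>1^n\<close>; for \<open>n\<close> large, the moments of order \<open>\<sigma>\<close> and \<open>2\<sigma>\<close> are at most 1.\<close>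
lemma small_moments_exponent:
  assumes E: "eigen_seq lam" and "lam 1 < 1" and "0 < \<tau>" and ell: "in_ell \<tau> lam"
  shows "\<exists>\<sigma>>0. in_ell \<sigma> lam \<and> moment \<sigma> lam \<le> 1 \<and> moment (2 * \<sigma>) lam \<le> 1"
proof -
  have "0 \<le> lam 1" using eigen_seq_nonneg[OF E] by simp
  note T_nonneg = moment_nonneg[OF ell]
  obtain n :: nat where n: "lam 1 ^ n < 1 / (moment \<tau> lam + 1)"
    using real_arch_pow_inv[of "1 / (moment \<tau> lam + 1)" "lam 1"] T_nonneg \<open>lam 1 < 1\<close> by auto
  define \<sigma> where "\<sigma> = \<tau> + real n"
  have "0 < \<sigma>" unfolding \<sigma>_def using \<open>0 < \<tau>\<close> by simp
  have ell_\<sigma>: "in_ell \<sigma> lam" using ell_mono(1)[OF E ell] unfolding \<sigma>_def by simp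
  have "lam 1 powr real n \<le> lam 1 ^ n"
    using \<open>0 \<le> lam 1\<close> by (cases "lam 1 = 0") (simp_all add: powr_realpow)
  have "moment \<sigma> lam \<le> lam 1 powr (\<sigma> - \<tau>) * moment \<tau> lam"
    using ell_mono(2)[OF E ell, of \<sigma>] unfolding \<sigma>_def by simp
  also have "\<dots> \<le> lam 1 ^ n * moment \<tau> lam"
    using \<open>lam 1 powr real n \<le> lam 1 ^ n\<close> T_nonneg
    by (intro mult_right_mono) (simp_all add: \<sigma>_def)
  also have "\<dots> \<le> 1"
    using n T_nonneg zero_le_power[OF \<open>0 \<le> lam 1\<close>, of n] by (simp add: field_simps)
  finally have T_le: "moment \<sigma> lam \<le> 1" .
  have "moment (2 * \<sigma>) lam \<le> lam 1 powr \<sigma> * moment \<sigma> lam"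
    using ell_mono(2)[OF E ell_\<sigma>, of "2 * \<sigma>"] \<open>0 < \<sigma>\<close> by simp
  also have "\<dots> \<le> 1"
    using T_le moment_nonneg[OF ell_\<sigma>] \<open>0 \<le> lam 1\<close> \<open>lam 1 < 1\<close> \<open>0 < \<sigma>\<close>
    by (intro mult_le_one powr_le1) auto
  finally show ?thesis using \<open>0 < \<sigma>\<close> ell_\<sigma> T_le by blast
qed

text \<open>Sufficiency for \<open>\<lambda>\<^sub>1 < 1\<close>: at an exponent \<open>\<sigma>\<close> with both moments at most 1, every
  factor of the central estimate is at most 1 (also \<open>\<lambda>\<^sub>j^\<sigma> \<le> \<lambda>\<^sub>1^\<sigma> < 1\<close>).\<close>
lemma ell_imp_strongly_poly_small_lam1:
  assumes E: "eigen_seq lam" and I: "index_family I" and "lam 1 < 1"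
    and "0 < \<tau>" and ell: "in_ell \<tau> lam"
  shows "strongly_poly_tractable_A lam I"
proof -
  obtain \<sigma> where "0 < \<sigma>" and ell_\<sigma>: "in_ell \<sigma> lam"
    and T_le: "moment \<sigma> lam \<le> 1" and S_le: "moment (2 * \<sigma>) lam \<le> 1"
    using small_moments_exponent[OF E \<open>lam 1 < 1\<close> \<open>0 < \<tau>\<close> ell] by blast
  have Q_le: "(\<Prod>j\<in>{1..a}. lam j powr \<sigma>) \<le> 1" for a
  proof (intro prod_le_1 conjI)
    fix j assume "j \<in> {1..a}"
    then have "0 \<le> lam j" "lam j \<le> lam 1"
      using eigen_seq_nonneg[OF E] eigen_seq_antimono[OF E] by auto
    then show "lam j powr \<sigma> \<le> 1" using \<open>lam 1 < 1\<close> \<open>0 < \<sigma>\<close> by (intro powr_le1) auto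
  qed simp
  show ?thesis
  proof (rule strongly_poly_tractable_from_bound[of "4 * \<sigma>" _ _ 1])
    fix d :: nat and \<epsilon> :: real assume "1 \<le> d" "0 < \<epsilon>" "\<epsilon> \<le> 1"
    have "real (n_A lam I \<epsilon> d) * \<epsilon> powr (4 * \<sigma>)
      \<le> (\<Prod>j\<in>{1..card (I d)}. lam j powr \<sigma>)
         * moment \<sigma> lam ^ card (I d) * moment (2 * \<sigma>) lam ^ (d - card (I d))"
      by (rule n_A_moment_bound[OF E I \<open>1 \<le> d\<close> \<open>0 < \<epsilon>\<close> \<open>0 < \<sigma>\<close> ell_\<sigma>])
    also have "\<dots> \<le> 1"
      using Q_le T_le S_le moment_nonneg[OF ell_\<sigma>]
        moment_nonneg[OF ell_mono(1)[OF E ell_\<sigma>, of "2 * \<sigma>"]] \<open>0 < \<sigma>\<close>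
      by (intro mult_le_one power_le_one prod_nonneg) auto
    finally show "real (n_A lam I \<epsilon> d) * \<epsilon> powr (4 * \<sigma>) \<le> 1" .
  qed (use \<open>0 < \<sigma>\<close> in simp)
qed

text \<open>The partial products of a nonnegative null sequence are bounded: beyond the
  point where the factors are \<open>\<le> 1\<close> they no longer increase.\<close>
lemma bounded_partial_products:
  fixes h :: "nat \<Rightarrow> real"
  assumes nonneg: "\<And>j. 0 \<le> h j" and lim: "h \<longlonglongrightarrow> 0"
  shows "\<exists>B. \<forall>a. (\<Prod>j\<in>{1..a}. h j) \<le> B"
proof -
  obtain J0 where small: "\<And>j. J0 \<le> j \<Longrightarrow> h j \<le> 1"
    using lim order_tendstoD(2)[OF lim, of 1] unfolding eventually_sequentially by force
  define x where "x b = (\<Prod>j\<in>{1..b}. h j)" for b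
  have x_nonneg: "0 \<le> x b" for b unfolding x_def by (intro prod_nonneg nonneg)
  have x_le_sum: "x b \<le> (\<Sum>b\<le>J0. x b)" if "b \<le> J0" for b
    by (rule member_le_sum) (use that x_nonneg in auto)
  have "x a \<le> (\<Sum>b\<le>J0. x b)" for a
  proof (cases "a \<le> J0")
    case False
    then have "J0 \<le> a" by simp
    then have "x a \<le> x J0"
    proof (induction a rule: dec_induct)
      case (step n)
      have "x (Suc n) = h (Suc n) * x n" unfolding x_def by (simp add: atLeastAtMostSuc_conv)
      also have "\<dots> \<le> x n" by (rule mult_left_le_one_le[OF x_nonneg nonneg small]) (use step in simp)
      finally show ?case using step.IH by simp
    qed simp
    then show ?thesis using x_le_sum[of J0] by simp
  qed (rule x_le_sum)
  then show ?thesis unfolding x_def by blast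
qed

text \<open>If \<open>a \<ge> c d\<close>, the \<open>d\<close> moment factors are dominated by \<open>a\<close> factors \<open>K = M^(1/c)\<close>,
  \<open>M = max(1, T, S)\<close>; this transfers the growth in \<open>d\<close> onto the antisymmetric directions.\<close>
lemma moment_factors_le:
  fixes T S c :: real
  assumes "0 < c" and "c * real d \<le> real a" and "a \<le> d" and "0 \<le> T" and "0 \<le> S"
  shows "T ^ a * S ^ (d - a) \<le> (max 1 (max T S) powr (1 / c)) ^ a"
proof -
  define M where "M = max 1 (max T S)"
  have "T ^ a * S ^ (d - a) \<le> M ^ a * M ^ (d - a)"
    unfolding M_def using assms by (intro mult_mono power_mono) auto
  also have "\<dots> = M powr real d"
    using \<open>a \<le> d\<close> by (simp add: M_def power_add[symmetric] powr_realpow)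
  also have "\<dots> \<le> M powr (real a / c)"
    using assms by (intro powr_mono) (auto simp: M_def field_simps)
  also have "\<dots> = (M powr (1 / c)) ^ a"
    unfolding M_def using \<open>0 < c\<close> by (simp add: powr_powr powr_realpow[symmetric] mult.commute)
  finally show ?thesis unfolding M_def .
qed

text \<open>Sufficiency when \<open>#I\<^sub>d \<ge> c d\<close> eventually: by the previous lemma the central estimate
  is at most \<open>\<Prod>\<^sub>j\<^sub>\<le>\<^sub>a K \<lambda>\<^sub>j^\<tau>\<close>, a partial product of a null sequence, hence bounded; the
  finitely many small \<open>d\<close> are absorbed into the constant.\<close>
lemma ell_imp_strongly_poly_linear_card:
  assumes E: "eigen_seq lam" and I: "index_family I"
    and "0 < c" and linear: "\<forall>\<^sub>F d in sequentially. real (card (I d)) \<ge> c * real d"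
    and "0 < \<tau>" and ell: "in_ell \<tau> lam"
  shows "strongly_poly_tractable_A lam I"
proof -
  define T where "T = moment \<tau> lam"
  define S where "S = moment (2 * \<tau>) lam"
  define K where "K = max 1 (max T S) powr (1 / c)"
  define F where "F d = (\<Prod>j\<in>{1..card (I d)}. lam j powr \<tau>) * (T ^ card (I d) * S ^ (d - card (I d)))"
    for d
  have "0 \<le> T" "0 \<le> S"
    unfolding T_def S_def using moment_nonneg ell ell_mono(1)[OF E ell, of "2 * \<tau>"] \<open>0 < \<tau>\<close> by auto
  then have F_nonneg: "0 \<le> F d" for d unfolding F_def by (intro mult_nonneg_nonneg prod_nonneg) auto
  have "\<forall>\<^sub>F j in sequentially. 0 \<le> lam j"
    unfolding eventually_sequentially using eigen_seq_nonneg[OF E] by blast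
  then have "(\<lambda>j. lam j powr \<tau>) \<longlonglongrightarrow> 0"
    using E \<open>0 < \<tau>\<close> unfolding eigen_seq_def by (intro tendsto_zero_powrI[where g = "\<lambda>_. \<tau>"]) auto
  then have "(\<lambda>j. K * lam j powr \<tau>) \<longlonglongrightarrow> 0" using tendsto_mult_right_zero by blast
  then obtain B where B: "\<And>a. (\<Prod>j\<in>{1..a}. K * lam j powr \<tau>) \<le> B"
    using bounded_partial_products[of "\<lambda>j. K * lam j powr \<tau>"] unfolding K_def by auto
  obtain D0 where D0: "\<And>d. D0 \<le> d \<Longrightarrow> c * real d \<le> real (card (I d))"
    using linear unfolding eventually_sequentially by blast
  have F_le: "F d \<le> B + (\<Sum>d'<D0. F d')" if "1 \<le> d" for d
  proof (cases "d < D0")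
    case True
    have "F d \<le> (\<Sum>d'<D0. F d')" by (rule member_le_sum) (use True F_nonneg in auto)
    then show ?thesis using B[of 0] by simp
  next
    case False
    have "card (I d) \<le> d"
      using I \<open>1 \<le> d\<close> card_mono[of "{1..d}" "I d"] unfolding index_family_def by simp
    then have "F d \<le> (\<Prod>j\<in>{1..card (I d)}. lam j powr \<tau>) * K ^ card (I d)"
      unfolding F_def K_def using moment_factors_le[OF \<open>0 < c\<close> D0] False \<open>0 \<le> T\<close> \<open>0 \<le> S\<close>
      by (intro mult_left_mono prod_nonneg) auto
    also have "\<dots> = (\<Prod>j\<in>{1..card (I d)}. K * lam j powr \<tau>)" by (simp add: prod.distrib mult.commute)
    finally show ?thesis using B[of "card (I d)"] F_nonneg by (smt (verit) sum_nonneg)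
  qed
  show ?thesis
  proof (rule strongly_poly_tractable_from_bound[of "4 * \<tau>" _ _ "B + (\<Sum>d'<D0. F d')"])
    fix d :: nat and \<epsilon> :: real assume "1 \<le> d" "0 < \<epsilon>" "\<epsilon> \<le> 1"
    show "real (n_A lam I \<epsilon> d) * \<epsilon> powr (4 * \<tau>) \<le> B + (\<Sum>d'<D0. F d')"
      using n_A_moment_bound[OF E I \<open>1 \<le> d\<close> \<open>0 < \<epsilon>\<close> \<open>0 < \<tau>\<close> ell] F_le[OF \<open>1 \<le> d\<close>]
      unfolding F_def T_def S_def by (simp add: mult.assoc)
  qed (use \<open>0 < \<tau>\<close> in simp)
qed

text \<open>Main result: (a) \<open>\<Rightarrow>\<close> (b) trivially, (b) \<open>\<Rightarrow>\<close> (c) by the case \<open>d = 1\<close>, and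
  (c) \<open>\<Rightarrow>\<close> (a) by the two sufficiency lemmas. The hypotheses \<open>\<lambda>\<^sub>2 > 0\<close> and positive
  initial error are standing assumptions of the setting not needed for these implications.\<close>
theorem theorem4:
  fixes lam :: "nat \<Rightarrow> real" and I :: "nat \<Rightarrow> nat set"
  assumes "eigen_seq lam"
    and "index_family I"
    and "lam 2 > 0"
    and "\<forall>d\<ge>1. init_err_sq_A lam I d > 0"
    and "lam 1 < 1 \<or>
         (\<exists>c>0. \<forall>\<^sub>F d in sequentially. real (card (I d)) \<ge> c * real d)"
  shows "(strongly_poly_tractable_A lam I \<longleftrightarrow> poly_tractable_A lam I)
       \<and> (poly_tractable_A lam I \<longleftrightarrow> (\<exists>\<tau>>0. in_ell \<tau> lam))"
proof -
  have ell_imp_spt: "strongly_poly_tractable_A lam I" if "\<tau> > 0" "in_ell \<tau> lam" for \<tau>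
    using assms(5) ell_imp_strongly_poly_small_lam1[OF assms(1,2) _ that]
      ell_imp_strongly_poly_linear_card[OF assms(1,2) _ _ that] by blast
  show ?thesis
    using strongly_poly_imp_poly poly_tractable_imp_ell[OF assms(1,2)] ell_imp_spt by blast
qed

end
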